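(* Let $a,b\in\mathbb{R}$ with $a<b$, let $n\in\mathbb{N}$ with $n\ge2$, let $q>1$, $p=\frac{q}{q-1}$, and assume $2q-p-1>0$. Then $$\left|A(a^n,b^n)-L_n^n(a,b)\right|\le \frac{n(n-1)(b-a)^2}{2}\left(\frac{q-1}{2q-p-1}\right)^{\frac{q-1}{q}}\bigl(\beta(p+1,q+1)\bigr)^{\frac1q}\left(\max\{|a|^{(n-2)q},|b|^{(n-2)q}\}\right)^{\frac1q}.$$
   Context: $A(x,y)=\frac{x+y}{2}$ (arithmetic mean). For $a\ne b$ and $n\in\mathbb{Z}\setminus\{-1,0\}$, $L_n(a,b)=\left[\frac{b^{n+1}-a^{n+1}}{(n+1)(b-a)}\right]^{1/n}$ (generalized logarithmic mean), so $L_n^n(a,b)=\frac{b^{n+1}-a^{n+1}}{(n+1)(b-a)}$. $\beta(x,y)=\int_0^1 t^{x-1}(1-t)^{y-1}\,dt$. *)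

theory Defs
  imports "HOL-Analysis.Analysis"
begin

definition AM :: "real \<Rightarrow> real \<Rightarrow> real" where
  "AM x y = (x + y) / 2"

text \<open>n-th power of the generalized logarithmic mean, L_n^n(a,b), for a \<noteq> b, n \<noteq> -1, 0.\<close>
definition Ln_pow :: "int \<Rightarrow> real \<Rightarrow> real \<Rightarrow> real" where
  "Ln_pow n a b = (b powi (n + 1) - a powi (n + 1)) / (real_of_int (n + 1) * (b - a))"

definition beta_fn :: "real \<Rightarrow> real \<Rightarrow> real" where
  "beta_fn x y = integral {0..1} (\<lambda>t. t powr (x - 1) * (1 - t) powr (y - 1))"

end

theory Submission
  imports Defs
begin

(*
  The quantity AM(a^n, b^n) - L_n^n(a,b) is the error of the trapezoidal rule for the
  mean value (1/(b-a)) \<integral>_a^b x^n dx.  We establish the sharp trapezoidal bound, with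
  constant 1/12, and then show that the constant of the stated bound dominates it:

  1. Trapezoidal rule: if |f''| \<le> K on [a,b] and F' = f, then
     |(b-a)(f a + f b)/2 - (F b - F a)| \<le> K (b-a)^3 / 12.  This is shown by comparing
     two auxiliary functions with K (x-a)^2/4 and K (x-a)^3/12 through their derivatives.
     For f x = x^n this gives |AM - L_n^n| \<le> n(n-1) (b-a)^2/12 * max(|a|^(n-2), |b|^(n-2)).
  2. A Hoelder inequality for the Henstock-Kurzweil integral, derived from Young's
     inequality by optimising over a scaling parameter.  Applied to
     t(1-t) = t^r * (t^(p/q) (1-t)) on [0,1] it yields
     1/6 \<le> ((q-1)/(2q-p-1))^((q-1)/q) * beta(p+1,q+1)^(1/q).
  The theorem follows since n(n-1)(b-a)^2/12 = n(n-1)(b-a)^2/2 * 1/6.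
*)

lemma abs_le_by_dominated_derivative:
  fixes \<phi> G \<phi>' G' :: "real \<Rightarrow> real"
  assumes "a \<le> x" and "\<phi> a = 0" and "G a = 0"
    and \<phi>: "\<And>t. a \<le> t \<Longrightarrow> t \<le> x \<Longrightarrow> (\<phi> has_real_derivative \<phi>' t) (at t)"
    and G: "\<And>t. a \<le> t \<Longrightarrow> t \<le> x \<Longrightarrow> (G has_real_derivative G' t) (at t)"
    and dom: "\<And>t. a \<le> t \<Longrightarrow> t \<le> x \<Longrightarrow> \<bar>\<phi>' t\<bar> \<le> G' t"
  shows "\<bar>\<phi> x\<bar> \<le> G x"
proof -
  have increasing: "h a \<le> h x"
    if dh: "\<And>t. a \<le> t \<Longrightarrow> t \<le> x \<Longrightarrow> (h has_real_derivative h' t) (at t) \<and> 0 \<le> h' t"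
    for h h' :: "real \<Rightarrow> real"
  proof (rule DERIV_nonneg_imp_increasing_open[OF \<open>a \<le> x\<close>])
    show "\<exists>y. (h has_real_derivative y) (at t) \<and> 0 \<le> y" if "a < t" "t < x" for t
      using dh[of t] that by auto
    show "continuous_on {a..x} h"
      using dh by (meson DERIV_isCont atLeastAtMost_iff continuous_at_imp_continuous_on)
  qed
  have "(\<lambda>t. G t - \<phi> t) a \<le> (\<lambda>t. G t - \<phi> t) x"
  proof (rule increasing[where h' = "\<lambda>t. G' t - \<phi>' t"])
    fix t assume t: "a \<le> t" "t \<le> x"
    show "((\<lambda>t. G t - \<phi> t) has_real_derivative G' t - \<phi>' t) (at t) \<and> 0 \<le> G' t - \<phi>' t"
      using DERIV_diff[OF G[OF t] \<phi>[OF t]] dom[OF t] by (auto simp: abs_le_iff)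
  qed
  moreover have "(\<lambda>t. G t + \<phi> t) a \<le> (\<lambda>t. G t + \<phi> t) x"
  proof (rule increasing[where h' = "\<lambda>t. G' t + \<phi>' t"])
    fix t assume t: "a \<le> t" "t \<le> x"
    show "((\<lambda>t. G t + \<phi> t) has_real_derivative G' t + \<phi>' t) (at t) \<and> 0 \<le> G' t + \<phi>' t"
      using DERIV_add[OF G[OF t] \<phi>[OF t]] dom[OF t] by (auto simp: abs_le_iff)
  qed
  ultimately show ?thesis
    using assms(2,3) by (simp add: abs_le_iff)
qed

section \<open>The error of the trapezoidal rule\<close>

text \<open>The classical error bound of the trapezoidal rule, stated with an antiderivative \<open>F\<close>
  of \<open>f\<close> so that no integral is needed.\<close>

lemma trapezoid_error_bound:
  fixes f f' f'' F :: "real \<Rightarrow> real"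
  assumes "a \<le> b"
    and F: "\<And>x. a \<le> x \<Longrightarrow> x \<le> b \<Longrightarrow> (F has_real_derivative f x) (at x)"
    and f: "\<And>x. a \<le> x \<Longrightarrow> x \<le> b \<Longrightarrow> (f has_real_derivative f' x) (at x)"
    and f': "\<And>x. a \<le> x \<Longrightarrow> x \<le> b \<Longrightarrow> (f' has_real_derivative f'' x) (at x)"
    and K: "\<And>x. a \<le> x \<Longrightarrow> x \<le> b \<Longrightarrow> \<bar>f'' x\<bar> \<le> K"
  shows "\<bar>(b - a) * (f a + f b) / 2 - (F b - F a)\<bar> \<le> K * (b - a)^3 / 12"
proof -
  define \<phi>1 where "\<phi>1 x = (f a - f x) / 2 + (x - a) * f' x / 2" for x
  define \<phi>0 where "\<phi>0 x = (x - a) * (f a + f x) / 2 - (F x - F a)" for x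
  have d\<phi>1: "(\<phi>1 has_real_derivative (x - a) * f'' x / 2) (at x)" if "a \<le> x" "x \<le> b" for x
    unfolding \<phi>1_def using f[OF that] f'[OF that]
    by (auto intro!: derivative_eq_intros simp: field_simps)
  have d\<phi>0: "(\<phi>0 has_real_derivative \<phi>1 x) (at x)" if "a \<le> x" "x \<le> b" for x
    unfolding \<phi>0_def \<phi>1_def using F[OF that] f[OF that]
    by (auto intro!: derivative_eq_intros simp: field_simps)
  have \<phi>1_bound: "\<bar>\<phi>1 x\<bar> \<le> K * (x - a)^2 / 4" if "a \<le> x" "x \<le> b" for x
  proof (rule abs_le_by_dominated_derivative[OF \<open>a \<le> x\<close>])
    show "((\<lambda>x. K * (x - a)^2 / 4) has_real_derivative K * (t - a) / 2) (at t)" for t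
      by (auto intro!: derivative_eq_intros)
    show "\<bar>(t - a) * f'' t / 2\<bar> \<le> K * (t - a) / 2" if "a \<le> t" "t \<le> x" for t
      using K[of t] that \<open>x \<le> b\<close> mult_left_mono[of "\<bar>f'' t\<bar>" K "t - a"]
      by (simp add: abs_mult mult.commute)
    show "\<phi>1 a = 0"
      by (simp add: \<phi>1_def)
  qed (use d\<phi>1 \<open>x \<le> b\<close> in auto)
  have "\<bar>\<phi>0 b\<bar> \<le> K * (b - a)^3 / 12"
  proof (rule abs_le_by_dominated_derivative[OF \<open>a \<le> b\<close>])
    show "((\<lambda>x. K * (x - a)^3 / 12) has_real_derivative K * (t - a)^2 / 4) (at t)" for t
      by (auto intro!: derivative_eq_intros)
    show "\<phi>0 a = 0"
      by (simp add: \<phi>0_def)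
  qed (use d\<phi>0 \<phi>1_bound in auto)
  then show ?thesis
    by (simp add: \<phi>0_def)
qed

lemma trapezoid_error_power:
  fixes a b :: real and n :: nat
  assumes "a < b" and "n \<ge> 2"
  shows "\<bar>(a^n + b^n) / 2 - (b^(n+1) - a^(n+1)) / (real (n+1) * (b - a))\<bar>
    \<le> real n * (real n - 1) * (b - a)^2 / 12 * max (\<bar>a\<bar>^(n-2)) (\<bar>b\<bar>^(n-2))"
proof -
  define M where "M = max (\<bar>a\<bar>^(n-2)) (\<bar>b\<bar>^(n-2))"
  have power_le_M: "\<bar>x\<bar>^(n-2) \<le> M" if "a \<le> x" "x \<le> b" for x
  proof -
    have "\<bar>x\<bar> \<le> \<bar>a\<bar> \<or> \<bar>x\<bar> \<le> \<bar>b\<bar>"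
      using that by linarith
    then show ?thesis
      unfolding M_def by (metis abs_ge_zero le_max_iff_disj power_mono)
  qed
  have n1: "real (n - 1) = real n - 1" "n - 1 - 1 = n - 2"
    using assms(2) by auto
  have "\<bar>(b - a) * (a^n + b^n) / 2 - (b^(n+1) / real (n+1) - a^(n+1) / real (n+1))\<bar>
      \<le> real n * (real n - 1) * M * (b - a)^3 / 12"
  proof (rule trapezoid_error_bound[where f' = "\<lambda>x. real n * x^(n-1)"
        and f'' = "\<lambda>x. real n * (real n - 1) * x^(n-2)"])
    show "((\<lambda>x. x^(n+1) / real (n+1)) has_real_derivative x^n) (at x)" for x
      using DERIV_cdivide[OF DERIV_pow[of "n+1" x], of "real (n+1)"] by simp
    show "((\<lambda>x. x^n) has_real_derivative real n * x^(n-1)) (at x)" for x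
      using DERIV_pow[of n x] by simp
    show "((\<lambda>x. real n * x^(n-1)) has_real_derivative real n * (real n - 1) * x^(n-2)) (at x)" for x
      using DERIV_cmult[OF DERIV_pow[of "n - 1" x], of "real n"] n1 by (simp add: mult.assoc)
    show "\<bar>real n * (real n - 1) * x^(n-2)\<bar> \<le> real n * (real n - 1) * M" if "a \<le> x" "x \<le> b" for x
      using power_le_M[OF that] assms(2) by (simp add: abs_mult power_abs)
  qed (use assms(1) in auto)
  moreover have "(b - a) * (a^n + b^n) / 2 - (b^(n+1) / real (n+1) - a^(n+1) / real (n+1))
      = (b - a) * ((a^n + b^n) / 2 - (b^(n+1) - a^(n+1)) / (real (n+1) * (b - a)))"
  proof -
    have "(b - a) * ((b^(n+1) - a^(n+1)) / (real (n+1) * (b - a))) = (b^(n+1) - a^(n+1)) / real (n+1)"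
      using assms(1) by simp
    then show ?thesis
      by (simp only: right_diff_distrib diff_divide_distrib)
  qed
  moreover have "real n * (real n - 1) * M * (b - a)^3 / 12
      = (b - a) * (real n * (real n - 1) * (b - a)^2 / 12 * M)"
    by (simp add: power3_eq_cube power2_eq_square)
  ultimately have "(b - a) * \<bar>(a^n + b^n) / 2 - (b^(n+1) - a^(n+1)) / (real (n+1) * (b - a))\<bar>
      \<le> (b - a) * (real n * (real n - 1) * (b - a)^2 / 12 * M)"
    using assms(1) by (simp add: abs_mult)
  then show ?thesis
    using assms(1) unfolding M_def by simp
qed

section \<open>A Hoelder inequality for the Henstock-Kurzweil integral\<close>

lemma Youngs_inequality_scaled:
  fixes p q x y s :: real
  assumes pq: "p > 1" "q > 1" "1/p + 1/q = 1" and "x \<ge> 0" "y \<ge> 0" "s > 0"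
  shows "x * y \<le> s powr p * x powr p / p + s powr (-q) * y powr q / q"
proof -
  have "(s * x) * (y / s) \<le> (s * x) powr p / p + (y / s) powr q / q"
    using assms by (intro Youngs_inequality) auto
  moreover have "(y / s) powr q = s powr (-q) * y powr q"
  proof -
    have "(y / s) powr q = y powr q / s powr q"
      using assms by (simp add: powr_divide)
    then show ?thesis
      by (simp add: powr_minus divide_inverse mult.commute)
  qed
  ultimately show ?thesis
    using \<open>s > 0\<close> by (simp add: powr_mult)
qed

lemma le_of_scaled_young_bounds:
  fixes p q A B I :: real
  assumes pq: "p > 1" "q > 1" "1/p + 1/q = 1" and "A \<ge> 0" "B \<ge> 0"
    and bound: "\<And>s. s > 0 \<Longrightarrow> I \<le> s powr p * A / p + s powr (-q) * B / q"
  shows "I \<le> A powr (1/p) * B powr (1/q)"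
proof (cases "A = 0 \<or> B = 0")
  case True
  have "I \<le> 0 + e" if "e > 0" for e
  proof (cases "B = 0")
    case True
    define s where "s = (e * p / (A + 1)) powr (1/p)"
    have "s powr p = e * p / (A + 1)"
      using \<open>e > 0\<close> pq \<open>A \<ge> 0\<close> by (simp add: s_def powr_powr)
    then have "I \<le> e * (A / (A + 1))"
      using bound[of s] True \<open>e > 0\<close> pq \<open>A \<ge> 0\<close> by (simp add: s_def)
    also have "\<dots> \<le> e"
      using \<open>e > 0\<close> \<open>A \<ge> 0\<close> by (intro mult_left_le) auto
    finally show ?thesis by simp
  next
    case False
    then have "A = 0" using \<open>A = 0 \<or> B = 0\<close> by simp
    define s where "s = (e * q / (B + 1)) powr (-1/q)"
    have "s powr (-q) = e * q / (B + 1)"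
      using \<open>e > 0\<close> pq \<open>B \<ge> 0\<close> by (simp add: s_def powr_powr)
    then have "I \<le> e * (B / (B + 1))"
      using bound[of s] \<open>A = 0\<close> \<open>e > 0\<close> pq \<open>B \<ge> 0\<close> by (simp add: s_def)
    also have "\<dots> \<le> e"
      using \<open>e > 0\<close> \<open>B \<ge> 0\<close> by (intro mult_left_le) auto
    finally show ?thesis by simp
  qed
  then have "I \<le> 0"
    by (rule field_le_epsilon)
  then show ?thesis
    using True pq by auto
next
  case False
  then have "A > 0" "B > 0"
    using assms(4,5) by auto
  have pq_sum: "p + q = p * q"
    using pq by (simp add: field_simps)
  have split_A: "A = A powr (1/p) * A powr (1/q)" and split_B: "B = B powr (1/p) * B powr (1/q)"
    using pq(3) \<open>A > 0\<close> \<open>B > 0\<close> by (simp_all add: powr_add[symmetric])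
  define s where "s = (B / A) powr (1 / (p + q))"
  have "s powr p = (B / A) powr (1/q)"
    using pq pq_sum by (simp add: s_def powr_powr)
  then have "s powr p * A = B powr (1/q) / A powr (1/q) * (A powr (1/p) * A powr (1/q))"
    using \<open>A > 0\<close> \<open>B > 0\<close> split_A by (simp add: powr_divide)
  also have "\<dots> = A powr (1/p) * B powr (1/q)"
    using \<open>A > 0\<close> by simp
  finally have sA: "s powr p * A = A powr (1/p) * B powr (1/q)" .
  have "s powr (-q) = (A / B) powr (1/p)"
    using pq pq_sum \<open>A > 0\<close> \<open>B > 0\<close>
    by (simp add: s_def powr_powr powr_divide powr_minus_divide)
  then have "s powr (-q) * B = A powr (1/p) / B powr (1/p) * (B powr (1/p) * B powr (1/q))"
    using \<open>A > 0\<close> \<open>B > 0\<close> split_B by (simp add: powr_divide)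
  also have "\<dots> = A powr (1/p) * B powr (1/q)"
    using \<open>B > 0\<close> by simp
  finally have sB: "s powr (-q) * B = A powr (1/p) * B powr (1/q)" .
  have "s > 0"
    using \<open>A > 0\<close> \<open>B > 0\<close> by (simp add: s_def)
  then have "I \<le> A powr (1/p) * B powr (1/q) * (1/p + 1/q)"
    using bound[of s] sA sB by (simp add: distrib_left)
  then show ?thesis
    using pq(3) by simp
qed

lemma Hoelder_inequality_has_integral:
  fixes f g :: "'a::euclidean_space \<Rightarrow> real" and p q A B I :: real
  assumes pq: "p > 1" "q > 1" "1/p + 1/q = 1"
    and nonneg: "\<And>x. x \<in> S \<Longrightarrow> f x \<ge> 0" "\<And>x. x \<in> S \<Longrightarrow> g x \<ge> 0"
    and fg: "((\<lambda>x. f x * g x) has_integral I) S"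
    and f: "((\<lambda>x. f x powr p) has_integral A) S"
    and g: "((\<lambda>x. g x powr q) has_integral B) S"
  shows "I \<le> A powr (1/p) * B powr (1/q)"
proof (rule le_of_scaled_young_bounds[OF pq])
  show "A \<ge> 0"
    by (rule has_integral_nonneg[OF f]) simp
  show "B \<ge> 0"
    by (rule has_integral_nonneg[OF g]) simp
  show "I \<le> s powr p * A / p + s powr (-q) * B / q" if "s > 0" for s
  proof (rule has_integral_le[OF fg])
    show "((\<lambda>x. s powr p * f x powr p / p + s powr (-q) * g x powr q / q)
        has_integral s powr p * A / p + s powr (-q) * B / q) S"
      using f g by (intro has_integral_add has_integral_divide has_integral_mult_right)
    show "f x * g x \<le> s powr p * f x powr p / p + s powr (-q) * g x powr q / q" if "x \<in> S" for x
      using Youngs_inequality_scaled[OF pq nonneg(1)[OF that] nonneg(2)[OF that] \<open>s > 0\<close>] .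
  qed
qed

text \<open>The constant in the stated bound is at least the sharp constant \<open>1/6\<close> of the trapezoidal
  rule: Hoelder's inequality for \<open>t(1-t) = t^r * (t^(p/q) (1-t))\<close> with \<open>r = 1 - p/q\<close> gives
  \<open>1/6 = \<integral>_0^1 t(1-t) dt \<le> (\<integral>_0^1 t^(rp) dt)^(1/p) beta(p+1,q+1)^(1/q)\<close>.\<close>

lemma one_sixth_le_beta_constant:
  fixes p q :: real
  assumes "q > 1" and p_def: "p = q / (q - 1)" and "2 * q - p - 1 > 0"
  shows "1/6 \<le> ((q - 1) / (2 * q - p - 1)) powr ((q - 1) / q) * beta_fn (p + 1) (q + 1) powr (1 / q)"
proof -
  have "p > 1" and conj: "1/p + 1/q = 1" and exp_p: "(q - 1) / q = 1/p"
    unfolding p_def using \<open>q > 1\<close> by (simp_all add: field_simps)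
  define r where "r = 1 - p / q"
  have rp1: "r * p + 1 = (2 * q - p - 1) / (q - 1)"
  proof -
    have p_q: "p * (q - 1) = q" and r_q: "r * q = q - p"
      unfolding r_def p_def using \<open>q > 1\<close> by (simp_all add: field_simps)
    have "(r * p + 1) * (q - 1) = r * (p * (q - 1)) + (q - 1)"
      by (simp add: algebra_simps)
    also have "\<dots> = 2 * q - p - 1"
      unfolding p_q r_q by simp
    finally have "(r * p + 1) * (q - 1) = 2 * q - p - 1" .
    then show ?thesis
      using \<open>q > 1\<close> by (simp add: eq_divide_eq)
  qed
  have int_f: "((\<lambda>t. (t powr r) powr p) has_integral (q - 1) / (2 * q - p - 1)) {0..1}"
  proof -
    have "(2 * q - p - 1) / (q - 1) > 0"
      using \<open>q > 1\<close> \<open>2 * q - p - 1 > 0\<close> by simp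
    then have "r * p > -1"
      using rp1 by linarith
    from has_integral_powr_from_0[OF this, of 1] show ?thesis
      using rp1 by (simp add: powr_powr)
  qed
  have int_g: "((\<lambda>t. (t powr (p / q) * (1 - t)) powr q) has_integral beta_fn (p + 1) (q + 1)) {0..1}"
  proof -
    have "continuous_on {0..1} (\<lambda>t::real. t powr p * (1 - t) powr q)"
      using \<open>p > 1\<close> \<open>q > 1\<close> by (intro continuous_on_mult continuous_on_powr' continuous_intros) auto
    then have "((\<lambda>t. t powr p * (1 - t) powr q) has_integral beta_fn (p + 1) (q + 1)) {0..1}"
      unfolding beta_fn_def by (simp add: integrable_integral integrable_continuous_interval)
    then show ?thesis
      by (rule has_integral_eq[rotated]) (use \<open>q > 1\<close> in \<open>simp add: powr_mult powr_powr\<close>)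
  qed
  have int_fg: "((\<lambda>t. t powr r * (t powr (p / q) * (1 - t))) has_integral 1/6) {0..1::real}"
  proof -
    have "((\<lambda>t. t * (1 - t)) has_integral ((\<lambda>t. t^2/2 - t^3/3) 1 - (\<lambda>t. t^2/2 - t^3/3) 0)) {0..1::real}"
      by (rule fundamental_theorem_of_calculus)
        (auto intro!: derivative_eq_intros
          simp: has_real_derivative_iff_has_vector_derivative[symmetric] power2_eq_square field_simps)
    then have "((\<lambda>t. t * (1 - t)) has_integral 1/6) {0..1::real}"
      by simp
    then show ?thesis
    proof (rule has_integral_eq[rotated])
      show "t * (1 - t) = t powr r * (t powr (p / q) * (1 - t))" if "t \<in> {0..1}" for t
        using that by (cases "t = 0") (simp_all add: r_def mult.assoc powr_add[symmetric])
    qed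
  qed
  show ?thesis
    unfolding exp_p
    by (rule Hoelder_inequality_has_integral[OF \<open>p > 1\<close> \<open>q > 1\<close> conj _ _ int_fg int_f int_g]) auto
qed

lemma Ln_pow_of_nat: "Ln_pow (int n) a b = (b^(n+1) - a^(n+1)) / (real (n+1) * (b - a))"
proof -
  have "int n + 1 = int (n + 1)"
    by simp
  then show ?thesis
    unfolding Ln_pow_def by (simp only: power_int_of_nat of_int_of_nat_eq)
qed

lemma max_powr_root:
  fixes X Y q :: real
  assumes "X \<ge> 0" "Y \<ge> 0" "q > 0"
  shows "(max (X powr q) (Y powr q)) powr (1/q) = max X Y"
proof -
  have "max (X powr q) (Y powr q) = (max X Y) powr q"
  proof (cases "X \<le> Y")
    case True
    then show ?thesis
      using assms by (simp add: max_absorb2 powr_mono2)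
  next
    case False
    then show ?thesis
      using assms by (simp add: max_absorb1 powr_mono2)
  qed
  then show ?thesis
    using assms by (simp add: powr_powr)
qed

theorem proposition5:
  fixes a b q p :: real and n :: nat
  assumes "a < b" and "n \<ge> 2" and "q > 1" and "p = q / (q - 1)"
    and "2 * q - p - 1 > 0"
  shows "\<bar>AM (a ^ n) (b ^ n) - Ln_pow (int n) a b\<bar>
    \<le> real n * (real n - 1) * (b - a)^2 / 2
       * ((q - 1) / (2 * q - p - 1)) powr ((q - 1) / q)
       * (beta_fn (p + 1) (q + 1)) powr (1 / q)
       * (max ((\<bar>a\<bar> ^ (n - 2)) powr q) ((\<bar>b\<bar> ^ (n - 2)) powr q)) powr (1 / q)"
proof -
  define N where "N = real n * (real n - 1) * (b - a)^2 / 2"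
  define C where "C = ((q - 1) / (2 * q - p - 1)) powr ((q - 1) / q) * (beta_fn (p + 1) (q + 1)) powr (1 / q)"
  define M where "M = max (\<bar>a\<bar>^(n-2)) (\<bar>b\<bar>^(n-2))"
  have "N \<ge> 0" "M \<ge> 0"
    using \<open>n \<ge> 2\<close> by (auto simp: N_def M_def le_max_iff_disj)
  have "\<bar>AM (a ^ n) (b ^ n) - Ln_pow (int n) a b\<bar> \<le> N * (1/6) * M"
    using trapezoid_error_power[OF \<open>a < b\<close> \<open>n \<ge> 2\<close>]
    by (simp add: AM_def Ln_pow_of_nat N_def M_def)
  also have "\<dots> \<le> N * C * M"
    using one_sixth_le_beta_constant[OF assms(3-5)] \<open>N \<ge> 0\<close> \<open>M \<ge> 0\<close>
    unfolding C_def by (intro mult_right_mono mult_left_mono) auto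
  also have "M = (max ((\<bar>a\<bar> ^ (n - 2)) powr q) ((\<bar>b\<bar> ^ (n - 2)) powr q)) powr (1 / q)"
    using \<open>q > 1\<close> by (simp add: M_def max_powr_root)
  finally show ?thesis
    by (simp add: N_def C_def mult.assoc)
qed

end
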